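(* Let $G=(U,V,E)$ be a finite bipartite graph, $F\subseteq E$, and let $(E_r,E_b)$ be an $(A,B,C)$-free bipartition of the set $E_c$ of committed edges of $G$. Let $E_u=E\setminus E_c$ be the set of uncommitted edges. Then the subgraph $(U,V,E_b\cup E_u)$ of $G$ is a chain graph.
   Context: A chain graph is a bipartite graph with no induced $2K_2$. $\hat{E}=\{uv: u\in U,\ v\in V,\ uv\notin E\}$. Two edges $u_1v_1,u_2v_2\in E$ ($u_i\in U$, $v_i\in V$) are in conflict in $G$ if $u_1v_2\notin E$ and $u_2v_1\notin E$. An edge is committed if it is in conflict with some other edge of $E$, and uncommitted otherwise. A bipartition of $E_c$ is a pair $(E_r,E_b)$ with $E_r\cap E_b=\emptyset$, $E_r\cup E_b=E_c$, $F\cap E_c\subseteq E_b$. It is $(A,B,C)$-free if there are no $u_1,u_2\in U$, $v_1,v_2\in V$ forming: $(A_1)$: $u_1v_1,u_2v_2\in E_r$, $u_1v_2,u_2v_1\in\hat{E}$; $(A_2)$: $u_1v_1,u_2v_2\in E_b$, $u_1v_2,u_2v_1\in\hat{E}$; $(B_1)$: $u_1v_1,u_2v_2\in E_r$, $u_1v_2\in\hat{E}$, $u_2v_1\in E_b$; $(B_2)$: $u_1v_1,u_2v_2\in E_b$, $u_1v_2\in\hat{E}$, $u_2v_1\in E_r$; $(C)$: $u_1v_1,u_2v_2\in E_r$, $u_1v_2\in\hat{E}$, $u_2v_1\in F$. *)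

theory Defs
  imports Main
begin

definition bipartite_graph :: "'a set \<Rightarrow> 'a set \<Rightarrow> ('a \<times> 'a) set \<Rightarrow> bool" where
  "bipartite_graph U V E \<longleftrightarrow> U \<inter> V = {} \<and> E \<subseteq> U \<times> V"

definition non_edges :: "'a set \<Rightarrow> 'a set \<Rightarrow> ('a \<times> 'a) set \<Rightarrow> ('a \<times> 'a) set" where
  "non_edges U V E = {(u,v). u \<in> U \<and> v \<in> V \<and> (u,v) \<notin> E}"

definition chain_graph :: "'a set \<Rightarrow> 'a set \<Rightarrow> ('a \<times> 'a) set \<Rightarrow> bool" where
  "chain_graph U V E \<longleftrightarrow> bipartite_graph U V E \<and>
     \<not> (\<exists>u1\<in>U. \<exists>u2\<in>U. \<exists>v1\<in>V. \<exists>v2\<in>V.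
          (u1,v1) \<in> E \<and> (u2,v2) \<in> E \<and> (u1,v2) \<notin> E \<and> (u2,v1) \<notin> E)"

definition in_conflict :: "('a \<times> 'a) set \<Rightarrow> ('a \<times> 'a) \<Rightarrow> ('a \<times> 'a) \<Rightarrow> bool" where
  "in_conflict E e1 e2 \<longleftrightarrow> e1 \<in> E \<and> e2 \<in> E \<and>
     (fst e1, snd e2) \<notin> E \<and> (fst e2, snd e1) \<notin> E"

definition committed_edges :: "('a \<times> 'a) set \<Rightarrow> ('a \<times> 'a) set" where
  "committed_edges E = {e \<in> E. \<exists>e' \<in> E. e' \<noteq> e \<and> in_conflict E e e'}"

definition uncommitted_edges :: "('a \<times> 'a) set \<Rightarrow> ('a \<times> 'a) set" where
  "uncommitted_edges E = E - committed_edges E"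

definition is_bipartition ::
  "('a \<times> 'a) set \<Rightarrow> ('a \<times> 'a) set \<Rightarrow> ('a \<times> 'a) set \<Rightarrow> ('a \<times> 'a) set \<Rightarrow> bool" where
  "is_bipartition E F Er Eb \<longleftrightarrow> Er \<inter> Eb = {} \<and> Er \<union> Eb = committed_edges E \<and>
     F \<inter> committed_edges E \<subseteq> Eb"

definition ABC_free ::
  "'a set \<Rightarrow> 'a set \<Rightarrow> ('a \<times> 'a) set \<Rightarrow> ('a \<times> 'a) set \<Rightarrow> ('a \<times> 'a) set \<Rightarrow> ('a \<times> 'a) set \<Rightarrow> bool" where
  "ABC_free U V E F Er Eb \<longleftrightarrow>
     is_bipartition E F Er Eb \<and>
     (\<forall>u1\<in>U. \<forall>u2\<in>U. \<forall>v1\<in>V. \<forall>v2\<in>V.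
        let Eh = non_edges U V E in
        \<not> ((u1,v1) \<in> Er \<and> (u2,v2) \<in> Er \<and> (u1,v2) \<in> Eh \<and> (u2,v1) \<in> Eh) \<and>
        \<not> ((u1,v1) \<in> Eb \<and> (u2,v2) \<in> Eb \<and> (u1,v2) \<in> Eh \<and> (u2,v1) \<in> Eh) \<and>
        \<not> ((u1,v1) \<in> Er \<and> (u2,v2) \<in> Er \<and> (u1,v2) \<in> Eh \<and> (u2,v1) \<in> Eb) \<and>
        \<not> ((u1,v1) \<in> Eb \<and> (u2,v2) \<in> Eb \<and> (u1,v2) \<in> Eh \<and> (u2,v1) \<in> Er) \<and>
        \<not> ((u1,v1) \<in> Er \<and> (u2,v2) \<in> Er \<and> (u1,v2) \<in> Eh \<and> (u2,v1) \<in> F))"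

end

theory Submission
  imports Defs
begin

text \<open>Call the edges of \<open>Er\<close> red and those of \<open>Eb\<close> blue; the subgraph in question is \<open>E - Er\<close>.
  Two edges in conflict have opposite colours (A1, A2), so two non-red edges are never in
  conflict, and the partner of a red edge is blue. An induced 2K2 of the non-red subgraph
  has two non-red edges whose diagonals are non-edges or red edges. If both diagonals are
  non-edges, the two edges conflict. Otherwise, taking blue conflict partners of the red
  diagonals and repeatedly using that non-red edges do not conflict forces further edges
  and colours, until a configuration of type B2 appears.\<close>

lemma conflict_committed:
  assumes "(u,v) \<in> E" "(x,y) \<in> E" "(u,y) \<notin> E" "(x,v) \<notin> E"
  shows "(u,v) \<in> committed_edges E"
proof -
  have "(x,y) \<noteq> (u,v)" using assms by auto
  then show ?thesis using assms unfolding committed_edges_def in_conflict_def by force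
qed

lemma committed_edge_has_conflict:
  assumes "(u,v) \<in> committed_edges E"
  obtains x y where "(x,y) \<in> E" "(u,y) \<notin> E" "(x,v) \<notin> E"
  using assms unfolding committed_edges_def in_conflict_def by fastforce

locale ABC_free_bipartition =
  fixes U V :: "'a set" and E F Er Eb :: "('a \<times> 'a) set"
  assumes bipartite: "bipartite_graph U V E"
    and free: "ABC_free U V E F Er Eb"
begin

lemma red_blue_disjoint: "Er \<inter> Eb = {}"
  and red_union_blue: "Er \<union> Eb = committed_edges E"
  using free unfolding ABC_free_def is_bipartition_def by auto

lemma blue_union_uncommitted: "Eb \<union> uncommitted_edges E = E - Er"
  using red_blue_disjoint red_union_blue
  unfolding uncommitted_edges_def committed_edges_def by blast

lemma red_subset: "Er \<subseteq> E" and blue_subset: "Eb \<subseteq> E"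
  using red_union_blue unfolding committed_edges_def by auto

lemma edge_endpoints: "(u,v) \<in> E \<Longrightarrow> u \<in> U \<and> v \<in> V"
  using bipartite unfolding bipartite_graph_def by auto

lemma conflict_opposite_colours:
  assumes uv: "(u,v) \<in> E" and xy: "(x,y) \<in> E" and "(u,y) \<notin> E" "(x,v) \<notin> E"
  shows "(u,v) \<in> Er \<longleftrightarrow> (x,y) \<in> Eb"
proof -
  have vertices: "u \<in> U" "v \<in> V" "x \<in> U" "y \<in> V"
    using edge_endpoints uv xy by auto
  then have "(u,y) \<in> non_edges U V E" "(x,v) \<in> non_edges U V E"
    using assms unfolding non_edges_def by auto
  then have "\<not> ((u,v) \<in> Er \<and> (x,y) \<in> Er)" "\<not> ((u,v) \<in> Eb \<and> (x,y) \<in> Eb)"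
    using free vertices unfolding ABC_free_def Let_def by blast+
  moreover have "(u,v) \<in> Er \<union> Eb" "(x,y) \<in> Er \<union> Eb"
    using conflict_committed[of u v E x y] conflict_committed[of x y E u v] assms red_union_blue
    by auto
  ultimately show ?thesis using red_blue_disjoint by blast
qed

lemma conflict_nonred_blue:
  assumes "(u,v) \<in> E - Er" "(x,y) \<in> E" "(u,y) \<notin> E" "(x,v) \<notin> E"
  shows "(u,v) \<in> Eb"
  using assms conflict_committed[of u v E x y] red_union_blue by blast

lemma nonred_not_in_conflict:
  assumes uv: "(u,v) \<in> E - Er" and xy: "(x,y) \<in> E - Er"
  shows "(u,y) \<in> E \<or> (x,v) \<in> E"
proof (rule ccontr)
  assume "\<not> ((u,y) \<in> E \<or> (x,v) \<in> E)"
  then have "(u,y) \<notin> E" "(x,v) \<notin> E" by auto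
  then have "(x,y) \<in> Eb" "(u,v) \<in> Er \<longleftrightarrow> (x,y) \<in> Eb"
    using conflict_nonred_blue[OF xy] conflict_opposite_colours uv xy by auto
  then show False using uv by blast
qed

lemma red_edge_blue_partner:
  assumes red: "(u,v) \<in> Er"
  obtains x y where "(x,y) \<in> Eb" "(u,y) \<notin> E" "(x,v) \<notin> E"
proof -
  have "(u,v) \<in> committed_edges E" using red red_union_blue by blast
  then obtain x y where xy: "(x,y) \<in> E" "(u,y) \<notin> E" "(x,v) \<notin> E"
    by (rule committed_edge_has_conflict)
  have "(u,v) \<in> E" using red red_subset by blast
  then have "(x,y) \<in> Eb" using conflict_opposite_colours[OF _ xy] red by simp
  then show thesis using that xy by simp
qed

lemma no_B2:
  assumes "(u1,v1) \<in> Eb" "(u2,v2) \<in> Eb" "(u1,v2) \<notin> E" "(u2,v1) \<in> Er"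
  shows False
proof -
  have vertices: "u1 \<in> U" "v1 \<in> V" "u2 \<in> U" "v2 \<in> V"
    using assms(1,2) blue_subset edge_endpoints by blast+
  then have "(u1,v2) \<in> non_edges U V E" using assms unfolding non_edges_def by auto
  then show False using free vertices assms unfolding ABC_free_def Let_def by blast
qed

lemma no_2K2_one_red_diagonal:
  assumes a: "(u1,v1) \<in> E - Er" and b: "(u2,v2) \<in> E - Er"
    and red: "(u1,v2) \<in> Er" and non_edge: "(u2,v1) \<notin> E"
  shows False
proof -
  obtain x y where xy: "(x,y) \<in> Eb" "(u1,y) \<notin> E" "(x,v2) \<notin> E"
    using red_edge_blue_partner[OF red] .
  have xy_nonred: "(x,y) \<in> E - Er" using xy blue_subset red_blue_disjoint by blast
  have "(u2,y) \<in> E" using nonred_not_in_conflict[OF b xy_nonred] xy by blast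
  have "(x,v1) \<in> E" using nonred_not_in_conflict[OF a xy_nonred] xy by blast
  have "(u2,v2) \<in> Eb"
    using conflict_nonred_blue[OF b \<open>(x,v1) \<in> E\<close> non_edge xy(3)] .
  moreover have "(u1,v1) \<in> Eb"
    using conflict_nonred_blue[OF a \<open>(u2,y) \<in> E\<close> xy(2) non_edge] .
  ultimately show False using no_B2 non_edge red by blast
qed

lemma two_red_diagonals_blue_link:
  assumes a: "(u1,v1) \<in> E - Er" and b: "(u2,v2) \<in> E - Er" and red: "(u2,v1) \<in> Er"
    and xy: "(x,y) \<in> Eb" "(u1,y) \<notin> E" "(x,v2) \<notin> E"
    and pq: "(p,q) \<in> Eb" "(u2,q) \<notin> E" "(p,v1) \<notin> E"
    and link: "(u2,y) \<in> Eb"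
  shows False
proof -
  have xy_nonred: "(x,y) \<in> E - Er" and pq_nonred: "(p,q) \<in> E - Er"
    using xy pq blue_subset red_blue_disjoint by blast+
  have "(u1,v1) \<notin> Eb" using no_B2 link xy(2) red by blast
  then have "(p,y) \<notin> E" using conflict_nonred_blue[OF a _ xy(2) pq(3)] by blast
  then have "(x,q) \<in> E" using nonred_not_in_conflict[OF xy_nonred pq_nonred] by blast
  have blue: "(u2,v2) \<in> Eb"
    using conflict_nonred_blue[OF b \<open>(x,q) \<in> E\<close> pq(2) xy(3)] .
  have "(p,v2) \<in> E" using nonred_not_in_conflict[OF b pq_nonred] pq(2) by blast
  then have "(p,v2) \<in> Er"
    using conflict_opposite_colours[OF _ _ \<open>(p,y) \<notin> E\<close> xy(3)] xy blue_subset by blast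
  then show False using no_B2[OF blue pq(1) pq(2)] by blast
qed

lemma no_2K2_two_red_diagonals:
  assumes a: "(u1,v1) \<in> E - Er" and b: "(u2,v2) \<in> E - Er"
    and red1: "(u1,v2) \<in> Er" and red2: "(u2,v1) \<in> Er"
  shows False
proof -
  obtain x y where xy: "(x,y) \<in> Eb" "(u1,y) \<notin> E" "(x,v2) \<notin> E"
    using red_edge_blue_partner[OF red1] .
  obtain p q where pq: "(p,q) \<in> Eb" "(u2,q) \<notin> E" "(p,v1) \<notin> E"
    using red_edge_blue_partner[OF red2] .
  have "(u2,y) \<in> E" "(u1,q) \<in> E"
    using nonred_not_in_conflict[OF b, of x y] nonred_not_in_conflict[OF a, of p q]
      xy pq blue_subset red_blue_disjoint by blast+
  then consider "(u2,y) \<in> Eb" | "(u1,q) \<in> Eb"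
    using conflict_opposite_colours conflict_nonred_blue xy(2) pq(2) by blast
  then show False
  proof cases
    case 1
    then show False using two_red_diagonals_blue_link[OF a b red2 xy pq] by blast
  next
    case 2
    then show False using two_red_diagonals_blue_link[OF b a red1 pq xy] by blast
  qed
qed

lemma nonred_subgraph_no_2K2:
  assumes a: "(u1,v1) \<in> E - Er" and b: "(u2,v2) \<in> E - Er"
    and "(u1,v2) \<notin> E - Er" "(u2,v1) \<notin> E - Er"
  shows False
proof (cases "(u1,v2) \<in> Er"; cases "(u2,v1) \<in> Er")
  assume "(u1,v2) \<notin> Er" "(u2,v1) \<notin> Er"
  then show False using assms nonred_not_in_conflict[OF a b] by blast
qed (use assms no_2K2_one_red_diagonal no_2K2_two_red_diagonals in blast)+

end

theorem lemma4:
  fixes U V :: "'a set" and E F Er Eb :: "('a \<times> 'a) set"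
  assumes "finite U" and "finite V"
    and "bipartite_graph U V E"
    and "F \<subseteq> E"
    and "ABC_free U V E F Er Eb"
  shows "chain_graph U V (Eb \<union> uncommitted_edges E)"
proof -
  interpret ABC_free_bipartition U V E F Er Eb
    using assms(3,5) by unfold_locales
  have "bipartite_graph U V (E - Er)"
    using bipartite unfolding bipartite_graph_def by blast
  then show ?thesis
    unfolding blue_union_uncommitted chain_graph_def using nonred_subgraph_no_2K2 by blast
qed

end
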